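(* Let $T$ be a tree, $uv\in E(T)$, and $T_u$ the connected component of $T\setminus uv$ containing $u$. If $u$ is saturated in $T_u$, then $u$ is saturated in $T$.
   Context: A $2$-matching of a graph $G$ is a set of edges such that every vertex is incident to at most two of them; a maximum $2$-matching is one of largest possible size. A vertex $w$ is saturated in $G$ if every maximum $2$-matching of $G$ has exactly two edges incident to $w$. *)

theory Defs
  imports Main
begin

definition simple_graph :: "'a set \<Rightarrow> 'a set set \<Rightarrow> bool" where
  "simple_graph V E \<longleftrightarrow> finite V \<and>
     (\<forall>e\<in>E. \<exists>x y. x \<noteq> y \<and> x \<in> V \<and> y \<in> V \<and> e = {x, y})"

definition adj_rel :: "'a set set \<Rightarrow> ('a \<times> 'a) set" where
  "adj_rel E = {(x, y). {x, y} \<in> E}"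

definition connected_graph :: "'a set \<Rightarrow> 'a set set \<Rightarrow> bool" where
  "connected_graph V E \<longleftrightarrow> V \<noteq> {} \<and> (\<forall>x\<in>V. \<forall>y\<in>V. (x, y) \<in> (adj_rel E)\<^sup>*)"

definition is_cycle :: "'a set set \<Rightarrow> 'a list \<Rightarrow> bool" where
  "is_cycle E xs \<longleftrightarrow> length xs \<ge> 3 \<and> distinct xs \<and>
     (\<forall>i. Suc i < length xs \<longrightarrow> {xs ! i, xs ! Suc i} \<in> E) \<and>
     {last xs, hd xs} \<in> E"

definition acyclic_graph :: "'a set set \<Rightarrow> bool" where
  "acyclic_graph E \<longleftrightarrow> (\<nexists>xs. is_cycle E xs)"

definition is_tree :: "'a set \<Rightarrow> 'a set set \<Rightarrow> bool" where
  "is_tree V E \<longleftrightarrow> simple_graph V E \<and> connected_graph V E \<and> acyclic_graph E"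

definition deg_in :: "'a set set \<Rightarrow> 'a \<Rightarrow> nat" where
  "deg_in M w = card {e \<in> M. w \<in> e}"

definition two_matching :: "'a set set \<Rightarrow> 'a set set \<Rightarrow> bool" where
  "two_matching E M \<longleftrightarrow> M \<subseteq> E \<and> (\<forall>w. deg_in M w \<le> 2)"

definition max_two_matching :: "'a set set \<Rightarrow> 'a set set \<Rightarrow> bool" where
  "max_two_matching E M \<longleftrightarrow> two_matching E M \<and>
     (\<forall>M'. two_matching E M' \<longrightarrow> card M' \<le> card M)"

definition saturated :: "'a set set \<Rightarrow> 'a \<Rightarrow> bool" where
  "saturated E w \<longleftrightarrow> (\<forall>M. max_two_matching E M \<longrightarrow> deg_in M w = 2)"

definition component_verts :: "'a set \<Rightarrow> 'a set set \<Rightarrow> 'a \<Rightarrow> 'a set" where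
  "component_verts V E' u = {x \<in> V. (u, x) \<in> (adj_rel E')\<^sup>*}"

definition component_edges :: "'a set \<Rightarrow> 'a set set \<Rightarrow> 'a \<Rightarrow> 'a set set" where
  "component_edges V E' u = {e \<in> E'. e \<subseteq> component_verts V E' u}"

end

theory Submission
  imports Defs "HOL-Library.Transitive_Closure_Table"
begin

text \<open>Write \<nu>(F) for the maximum size of a 2-matching of F. Deleting uv splits the remaining
  edges into the component Eu of u and the rest Ev; these are vertex-disjoint, so
  \<nu>(E) \<ge> \<nu>(Eu) + \<nu>(Ev). A maximum 2-matching M of E with fewer than two edges at u either
  avoids uv, and then M \<inter> Eu is not maximum in Eu because u is saturated there, or uses uv
  as its only edge at u, and then M \<inter> Eu avoids u. The second case is excluded by the key
  lemma: in a forest F in which u is saturated, a 2-matching avoiding u has at most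
  \<nu>(F) - 2 edges. Otherwise deleting u lowers \<nu> by exactly one, which forces every
  neighbour w of u to be saturated in its component of F - u (else a maximum 2-matching of
  that component could be extended by uw). A maximum 2-matching of F has two edges uw1, uw2,
  and by acyclicity w1 and w2 lie in different components of F - u; on each of these two
  components it falls one short of the maximum, so F - u loses two, a contradiction.\<close>

definition two_matching_number :: "'a set set \<Rightarrow> nat" where
  "two_matching_number E = Max (card ` {M. two_matching E M})"

definition vertex_disjoint :: "'a set set \<Rightarrow> 'a set set \<Rightarrow> bool" where
  "vertex_disjoint A B \<longleftrightarrow> (\<forall>e\<in>A. \<forall>e'\<in>B. e \<inter> e' = {})"

lemma vertex_disjoint_mono: "vertex_disjoint A B \<Longrightarrow> B' \<subseteq> B \<Longrightarrow> vertex_disjoint A B'"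
  unfolding vertex_disjoint_def by blast

lemma vertex_disjoint_Int_empty:
  assumes "vertex_disjoint A B" "{} \<notin> A"
  shows "A \<inter> B = {}"
proof (rule equals0I)
  fix e assume "e \<in> A \<inter> B"
  then have "e \<inter> e = {}"
    using assms(1) unfolding vertex_disjoint_def by blast
  then show False
    using assms(2) \<open>e \<in> A \<inter> B\<close> by simp
qed

lemma card_le_card_Int_add_card_Int:
  "M \<subseteq> A \<union> B \<Longrightarrow> card M \<le> card (M \<inter> A) + card (M \<inter> B)"
  by (metis Int_Un_distrib Int_absorb2 card_Un_le)

lemma card_le_card_Int_add_card_Int_insert:
  assumes "finite M" "M \<subseteq> insert x (A \<union> B)"
  shows "card M \<le> card (M \<inter> A) + card (M \<inter> B) + 1"
proof -
  have "card M \<le> card (insert x ((M \<inter> A) \<union> (M \<inter> B)))"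
    using assms by (intro card_mono) auto
  also have "\<dots> \<le> card ((M \<inter> A) \<union> (M \<inter> B)) + 1"
    using assms(1) by (simp add: card_insert_if)
  also have "\<dots> \<le> card (M \<inter> A) + card (M \<inter> B) + 1"
    using card_Un_le by simp
  finally show ?thesis .
qed

lemma two_matching_empty: "two_matching E {}"
  by (simp add: two_matching_def deg_in_def)

lemma two_matching_finite: "finite E \<Longrightarrow> two_matching E M \<Longrightarrow> finite M"
  unfolding two_matching_def by (blast intro: finite_subset)

lemma two_matching_mono: "two_matching G M \<Longrightarrow> G \<subseteq> F \<Longrightarrow> two_matching F M"
  unfolding two_matching_def by blast

lemma deg_in_mono: "finite M \<Longrightarrow> M' \<subseteq> M \<Longrightarrow> deg_in M' w \<le> deg_in M w"
  unfolding deg_in_def by (rule card_mono) auto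

lemma deg_in_Diff_edge:
  "finite M \<Longrightarrow> e \<in> M \<Longrightarrow> w \<in> e \<Longrightarrow> deg_in (M - {e}) w = deg_in M w - 1"
proof -
  assume "finite M" "e \<in> M" "w \<in> e"
  then have "{e' \<in> M - {e}. w \<in> e'} = {e' \<in> M. w \<in> e'} - {e}" "e \<in> {e' \<in> M. w \<in> e'}"
    by auto
  then show ?thesis
    unfolding deg_in_def using \<open>finite M\<close> by (simp add: card_Diff_singleton)
qed

lemma deg_in_Int_less_2:
  assumes "two_matching E M" "finite M" "e \<in> M - A" "w \<in> e"
  shows "deg_in (M \<inter> A) w < 2"
proof -
  have "deg_in (M \<inter> A) w \<le> deg_in (M - {e}) w"
    using assms(2,3) by (intro deg_in_mono) auto
  also have "\<dots> = deg_in M w - 1"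
    using assms(2-4) by (intro deg_in_Diff_edge) auto
  moreover have "deg_in M w \<le> 2"
    using assms(1) unfolding two_matching_def by blast
  ultimately show ?thesis
    by arith
qed

lemma deg_in_less_2_only_edge:
  assumes "finite M" "e \<in> M" "w \<in> e" "deg_in M w < 2" "e' \<in> M" "w \<in> e'"
  shows "e' = e"
proof -
  have "card {e \<in> M. w \<in> e} \<le> Suc 0"
    using assms(4) unfolding deg_in_def by simp
  then show ?thesis
    using assms card_le_Suc0_iff_eq[of "{e \<in> M. w \<in> e}"] by auto
qed

lemma two_matching_Int:
  assumes "finite M" "two_matching E M"
  shows "two_matching A (M \<inter> A)"
  unfolding two_matching_def
proof (intro conjI allI)
  fix w
  have "deg_in (M \<inter> A) w \<le> deg_in M w"
    using assms(1) by (rule deg_in_mono) blast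
  also have "\<dots> \<le> 2"
    using assms(2) unfolding two_matching_def by blast
  finally show "deg_in (M \<inter> A) w \<le> 2" .
qed blast

lemma two_matching_Un:
  assumes "two_matching A MA" "two_matching B MB" "vertex_disjoint A B"
  shows "two_matching (A \<union> B) (MA \<union> MB)"
  unfolding two_matching_def
proof (intro conjI allI)
  show "MA \<union> MB \<subseteq> A \<union> B"
    using assms unfolding two_matching_def by blast
  fix w
  have "{e \<in> MA. w \<in> e} = {} \<or> {e \<in> MB. w \<in> e} = {}"
  proof (rule ccontr)
    assume "\<not> ?thesis"
    then obtain e e' where "e \<in> A" "e' \<in> B" "w \<in> e \<inter> e'"
      using assms(1,2) unfolding two_matching_def by blast
    then show False
      using assms(3) unfolding vertex_disjoint_def by blast
  qed
  then show "deg_in (MA \<union> MB) w \<le> 2"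
  proof
    assume "{e \<in> MA. w \<in> e} = {}"
    then have "{e \<in> MA \<union> MB. w \<in> e} = {e \<in> MB. w \<in> e}"
      by blast
    then show ?thesis
      using assms(2) unfolding two_matching_def deg_in_def by simp
  next
    assume "{e \<in> MB. w \<in> e} = {}"
    then have "{e \<in> MA \<union> MB. w \<in> e} = {e \<in> MA. w \<in> e}"
      by blast
    then show ?thesis
      using assms(1) unfolding two_matching_def deg_in_def by simp
  qed
qed

lemma two_matching_insert:
  assumes M: "two_matching E M" and e: "e \<in> E" "\<forall>x\<in>e. deg_in M x \<le> 1"
  shows "two_matching E (insert e M)"
  unfolding two_matching_def
proof (intro conjI allI)
  show "insert e M \<subseteq> E"
    using M e unfolding two_matching_def by blast
  fix x
  show "deg_in (insert e M) x \<le> 2"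
  proof (cases "x \<in> e")
    case True
    then have "{e' \<in> insert e M. x \<in> e'} = insert e {e' \<in> M. x \<in> e'}"
      by blast
    moreover have "card {e' \<in> M. x \<in> e'} \<le> 2 - 1"
      using e True unfolding deg_in_def by simp
    ultimately show ?thesis
      unfolding deg_in_def by (simp add: card_insert_le_m1)
  next
    case False
    then have "{e' \<in> insert e M. x \<in> e'} = {e' \<in> M. x \<in> e'}"
      by blast
    then show ?thesis
      using M unfolding two_matching_def deg_in_def by simp
  qed
qed

lemma finite_two_matchings: "finite E \<Longrightarrow> finite {M. two_matching E M}"
  by (rule finite_subset[of _ "Pow E"]) (auto simp: two_matching_def)

lemma card_le_two_matching_number:
  "finite E \<Longrightarrow> two_matching E M \<Longrightarrow> card M \<le> two_matching_number E"
  unfolding two_matching_number_def by (simp add: finite_two_matchings)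

lemma ex_two_matching_card_eq_two_matching_number:
  assumes "finite E"
  obtains M where "two_matching E M" "card M = two_matching_number E"
proof -
  have "two_matching_number E \<in> card ` {M. two_matching E M}"
    unfolding two_matching_number_def
    using assms two_matching_empty by (intro Max_in) (auto simp: finite_two_matchings)
  then show ?thesis
    using that by (metis (mono_tags) imageE mem_Collect_eq)
qed

lemma max_two_matching_iff:
  assumes "finite E"
  shows "max_two_matching E M \<longleftrightarrow> two_matching E M \<and> card M = two_matching_number E"
proof -
  obtain M0 where "two_matching E M0" "card M0 = two_matching_number E"
    using ex_two_matching_card_eq_two_matching_number assms by blast
  then show ?thesis
    unfolding max_two_matching_def using card_le_two_matching_number[OF assms]
    by (metis le_antisym)
qed

lemma card_Int_le_two_matching_number:
  "finite M \<Longrightarrow> finite A \<Longrightarrow> two_matching E M \<Longrightarrow> card (M \<inter> A) \<le> two_matching_number A"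
  by (rule card_le_two_matching_number) (auto intro: two_matching_Int)

lemma two_matching_number_mono:
  assumes "finite F" "G \<subseteq> F"
  shows "two_matching_number G \<le> two_matching_number F"
proof -
  have "finite G"
    using assms by (rule finite_subset[rotated])
  then obtain M where M: "two_matching G M" "card M = two_matching_number G"
    by (rule ex_two_matching_card_eq_two_matching_number)
  have "card M \<le> two_matching_number F"
    using assms(1) two_matching_mono[OF M(1) assms(2)] by (rule card_le_two_matching_number)
  then show ?thesis
    using M(2) by simp
qed

lemma saturated_card_less:
  assumes "finite E" "saturated E w" "two_matching E M" "deg_in M w < 2"
  shows "card M < two_matching_number E"
proof -
  have "card M \<noteq> two_matching_number E"
  proof
    assume "card M = two_matching_number E"
    then have "max_two_matching E M"
      using max_two_matching_iff[OF assms(1)] assms(3) by simp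
    then have "deg_in M w = 2"
      using assms(2) unfolding saturated_def by blast
    then show False
      using assms(4) by simp
  qed
  then show ?thesis
    using card_le_two_matching_number[OF assms(1,3)] by simp
qed

lemma two_matching_number_Un:
  assumes fin: "finite A" "finite B" and "{} \<notin> A" and disj: "vertex_disjoint A B"
  shows "two_matching_number (A \<union> B) = two_matching_number A + two_matching_number B"
proof (rule antisym)
  obtain M where M: "two_matching (A \<union> B) M" "card M = two_matching_number (A \<union> B)"
    using fin by (meson ex_two_matching_card_eq_two_matching_number finite_UnI)
  have "finite M"
    using M(1) fin by (meson two_matching_finite finite_UnI)
  have "card M \<le> card (M \<inter> A) + card (M \<inter> B)"
    using M(1) unfolding two_matching_def by (intro card_le_card_Int_add_card_Int) blast
  also have "\<dots> \<le> two_matching_number A + two_matching_number B"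
    using card_Int_le_two_matching_number[OF \<open>finite M\<close> _ M(1)] fin by (simp add: add_mono)
  finally show "two_matching_number (A \<union> B) \<le> two_matching_number A + two_matching_number B"
    using M(2) by simp
next
  obtain MA where MA: "two_matching A MA" "card MA = two_matching_number A"
    using fin(1) by (rule ex_two_matching_card_eq_two_matching_number)
  obtain MB where MB: "two_matching B MB" "card MB = two_matching_number B"
    using fin(2) by (rule ex_two_matching_card_eq_two_matching_number)
  have "MA \<subseteq> A" "MB \<subseteq> B"
    using MA(1) MB(1) unfolding two_matching_def by blast+
  then have "MA \<inter> MB = {}"
    using vertex_disjoint_Int_empty[OF disj \<open>{} \<notin> A\<close>] by blast
  moreover have "finite MA" "finite MB"
    using fin \<open>MA \<subseteq> A\<close> \<open>MB \<subseteq> B\<close> by (auto intro: finite_subset)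
  ultimately have "card (MA \<union> MB) = two_matching_number A + two_matching_number B"
    using MA(2) MB(2) by (simp add: card_Un_disjoint)
  moreover have "card (MA \<union> MB) \<le> two_matching_number (A \<union> B)"
    using fin two_matching_Un[OF MA(1) MB(1) disj] by (simp add: card_le_two_matching_number)
  ultimately show "two_matching_number A + two_matching_number B \<le> two_matching_number (A \<union> B)"
    by simp
qed

subsection \<open>Simple graphs and their components\<close>

lemma simple_graph_mono: "simple_graph V E \<Longrightarrow> F \<subseteq> E \<Longrightarrow> simple_graph V F"
  unfolding simple_graph_def by blast

lemma simple_graph_finite_edges: "simple_graph V E \<Longrightarrow> finite E"
  unfolding simple_graph_def by (auto intro: finite_subset[of E "Pow V"])

lemma simple_graph_empty_notin: "simple_graph V E \<Longrightarrow> {} \<notin> E"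
  unfolding simple_graph_def by blast

lemma simple_graph_edge_at:
  "simple_graph V E \<Longrightarrow> e \<in> E \<Longrightarrow> u \<in> e \<Longrightarrow> \<exists>w. w \<noteq> u \<and> w \<in> V \<and> u \<in> V \<and> e = {u, w}"
  unfolding simple_graph_def by fast

lemma simple_graph_edge_vertices:
  assumes "simple_graph V E" "{x, y} \<in> E"
  shows "x \<in> V" "y \<in> V" "x \<noteq> y"
proof -
  obtain a b where "a \<noteq> b" "a \<in> V" "b \<in> V" "{x, y} = {a, b}"
    using assms unfolding simple_graph_def by blast
  then show "x \<in> V" "y \<in> V" "x \<noteq> y"
    by (auto simp: doubleton_eq_iff)
qed

lemma deg_in_2_neighbours:
  assumes "simple_graph V E" "two_matching E M" "deg_in M u = 2"
  obtains w1 w2 where "{e \<in> M. u \<in> e} = {{u, w1}, {u, w2}}" "w1 \<noteq> w2"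
proof -
  obtain e1 e2 where e12: "{e \<in> M. u \<in> e} = {e1, e2}" "e1 \<noteq> e2"
    using assms(3) unfolding deg_in_def card_2_iff by blast
  moreover have "e1 \<in> E" "e2 \<in> E" "u \<in> e1" "u \<in> e2"
    using e12(1) assms(2) unfolding two_matching_def by blast+
  ultimately obtain w1 w2 where "e1 = {u, w1}" "e2 = {u, w2}"
    using simple_graph_edge_at[OF assms(1)] by meson
  with e12 show ?thesis
    using that by blast
qed

lemma component_edges_subset: "component_edges V G w \<subseteq> G"
  unfolding component_edges_def by blast

lemma component_edges_closed:
  assumes "simple_graph V G" "e \<in> G" "x \<in> e" "x \<in> component_verts V G w"
  shows "e \<in> component_edges V G w"
proof -
  obtain y where y: "e = {x, y}" "x \<in> V" "y \<in> V"
    using simple_graph_edge_at[OF assms(1-3)] by blast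
  then have "(x, y) \<in> adj_rel G"
    using assms(2) unfolding adj_rel_def by simp
  then have "e \<subseteq> component_verts V G w"
    using assms(4) y unfolding component_verts_def by (auto intro: rtrancl_into_rtrancl)
  then show ?thesis
    using assms(2) unfolding component_edges_def by blast
qed

lemma edge_in_component_edges:
  "simple_graph V G \<Longrightarrow> w \<in> V \<Longrightarrow> e \<in> G \<Longrightarrow> w \<in> e \<Longrightarrow> e \<in> component_edges V G w"
  by (rule component_edges_closed) (auto simp: component_verts_def)

lemma vertex_disjoint_component_edges_Diff:
  assumes "simple_graph V G"
  shows "vertex_disjoint (component_edges V G w) (G - component_edges V G w)"
  unfolding vertex_disjoint_def
proof (intro ballI equals0I)
  fix e e' x
  assume "e \<in> component_edges V G w" "e' \<in> G - component_edges V G w" "x \<in> e \<inter> e'"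
  then show False
    using component_edges_closed[OF assms, of e' x w] unfolding component_edges_def by blast
qed

lemma vertex_disjoint_component_edges:
  assumes "(w1, w2) \<notin> (adj_rel G)\<^sup>*"
  shows "vertex_disjoint (component_edges V G w1) (component_edges V G w2)"
  unfolding vertex_disjoint_def
proof (intro ballI equals0I)
  fix e e' x
  assume "e \<in> component_edges V G w1" "e' \<in> component_edges V G w2" "x \<in> e \<inter> e'"
  then have "(w1, x) \<in> (adj_rel G)\<^sup>*" "(x, w2) \<in> (adj_rel G)\<^sup>*"
    using sym_rtrancl[of "adj_rel G"]
    unfolding component_edges_def component_verts_def sym_def adj_rel_def
    by (auto simp: insert_commute)
  then show False
    using assms by (meson rtrancl_trans)
qed

lemma two_matching_number_component_split:
  assumes "simple_graph V G"
  shows "two_matching_number G =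
    two_matching_number (component_edges V G w) + two_matching_number (G - component_edges V G w)"
proof -
  let ?S = "component_edges V G w"
  have "finite G" "{} \<notin> G"
    using assms by (rule simple_graph_finite_edges, rule simple_graph_empty_notin)
  then have "finite ?S" "finite (G - ?S)" "{} \<notin> ?S"
    using component_edges_subset[of V G w] by (auto intro: finite_subset)
  then have "two_matching_number (?S \<union> (G - ?S)) = two_matching_number ?S + two_matching_number (G - ?S)"
    using vertex_disjoint_component_edges_Diff[OF assms] by (rule two_matching_number_Un)
  moreover have "?S \<union> (G - ?S) = G"
    using component_edges_subset[of V G w] by blast
  ultimately show ?thesis
    by simp
qed

text \<open>Combine N with a maximum 2-matching of the remaining components.\<close>
lemma ex_max_two_matching_extending_component:
  assumes G: "simple_graph V G" and "w \<in> V"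
    and N: "two_matching (component_edges V G w) N" "card N = two_matching_number (component_edges V G w)"
  obtains M where "two_matching G M" "card M = two_matching_number G" "deg_in M w = deg_in N w"
proof -
  let ?S = "component_edges V G w"
  have "finite G"
    using G by (rule simple_graph_finite_edges)
  then have fin: "finite ?S" "finite (G - ?S)"
    using component_edges_subset[of V G w] by (auto intro: finite_subset)
  obtain NR where NR: "two_matching (G - ?S) NR" "card NR = two_matching_number (G - ?S)"
    using fin(2) by (rule ex_two_matching_card_eq_two_matching_number)
  have sub: "N \<subseteq> ?S" "NR \<subseteq> G - ?S"
    using N(1) NR(1) unfolding two_matching_def by blast+
  have "two_matching (?S \<union> (G - ?S)) (N \<union> NR)"
    using N(1) NR(1) vertex_disjoint_component_edges_Diff[OF G] by (rule two_matching_Un)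
  moreover have "?S \<union> (G - ?S) = G"
    using component_edges_subset[of V G w] by blast
  ultimately have "two_matching G (N \<union> NR)"
    by simp
  moreover have "card (N \<union> NR) = two_matching_number G"
  proof -
    have "finite N" "finite NR" "N \<inter> NR = {}"
      using fin sub by (auto intro: finite_subset)
    then show ?thesis
      using N(2) NR(2) two_matching_number_component_split[OF G, of w] by (simp add: card_Un_disjoint)
  qed
  moreover have "{e \<in> N \<union> NR. w \<in> e} = {e \<in> N. w \<in> e}"
    using sub edge_in_component_edges[OF G \<open>w \<in> V\<close>] by blast
  then have "deg_in (N \<union> NR) w = deg_in N w"
    unfolding deg_in_def by simp
  ultimately show ?thesis
    using that by blast
qed

lemma two_matching_number_two_components:
  assumes G: "simple_graph V G" and disc: "(w1, w2) \<notin> (adj_rel G)\<^sup>*"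
  defines "S1 \<equiv> component_edges V G w1" and "S2 \<equiv> component_edges V G w2"
  shows "two_matching_number G =
    two_matching_number S1 + two_matching_number S2 + two_matching_number (G - S1 - S2)"
proof -
  have "finite G" "{} \<notin> G"
    using G by (rule simple_graph_finite_edges, rule simple_graph_empty_notin)
  have sub: "S1 \<subseteq> G" "S2 \<subseteq> G"
    unfolding S1_def S2_def by (rule component_edges_subset)+
  have "vertex_disjoint S1 S2"
    unfolding S1_def S2_def using disc by (rule vertex_disjoint_component_edges)
  moreover have "{} \<notin> S1"
    using \<open>{} \<notin> G\<close> sub(1) by blast
  ultimately have "S1 \<inter> S2 = {}"
    by (rule vertex_disjoint_Int_empty)
  then have "G - S1 = S2 \<union> (G - S1 - S2)"
    using sub(2) by blast
  moreover have "vertex_disjoint S2 (G - S1 - S2)"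
    using vertex_disjoint_component_edges_Diff[OF G, of w2] unfolding S2_def
    by (rule vertex_disjoint_mono) blast
  then have "two_matching_number (S2 \<union> (G - S1 - S2)) =
      two_matching_number S2 + two_matching_number (G - S1 - S2)"
    using \<open>finite G\<close> \<open>{} \<notin> G\<close> sub by (intro two_matching_number_Un) (auto intro: finite_subset)
  ultimately show ?thesis
    using two_matching_number_component_split[OF G, of w1] unfolding S1_def by simp
qed

text \<open>Such an M falls short of the maximum on each of the two components.\<close>
lemma card_two_matching_deficient_in_two_components:
  assumes G: "simple_graph V G" and disc: "(w1, w2) \<notin> (adj_rel G)\<^sup>*"
    and sat: "saturated (component_edges V G w1) w1" "saturated (component_edges V G w2) w2"
    and M: "two_matching G M" "deg_in M w1 < 2" "deg_in M w2 < 2"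
  shows "card M + 2 \<le> two_matching_number G"
proof -
  define S1 where "S1 = component_edges V G w1"
  define S2 where "S2 = component_edges V G w2"
  have "finite G"
    using G by (rule simple_graph_finite_edges)
  then have fin: "finite S1" "finite S2" "finite (G - S1 - S2)" "finite M"
    using component_edges_subset[of V G w1] component_edges_subset[of V G w2]
      two_matching_finite[OF _ M(1)] unfolding S1_def S2_def by (auto intro: finite_subset)
  have "card (M \<inter> S1) < two_matching_number S1"
    using saturated_card_less[OF fin(1) sat(1)[folded S1_def] two_matching_Int[OF fin(4) M(1)]]
      deg_in_mono[OF fin(4), of "M \<inter> S1" w1] M(2) by simp
  moreover have "card (M \<inter> S2) < two_matching_number S2"
    using saturated_card_less[OF fin(2) sat(2)[folded S2_def] two_matching_Int[OF fin(4) M(1)]]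
      deg_in_mono[OF fin(4), of "M \<inter> S2" w2] M(3) by simp
  moreover have "card (M \<inter> (G - S1 - S2)) \<le> two_matching_number (G - S1 - S2)"
    using fin(4,3) M(1) by (rule card_Int_le_two_matching_number)
  moreover have "card M \<le> card (M \<inter> (S1 \<union> S2)) + card (M \<inter> (G - S1 - S2))"
    using M(1) unfolding two_matching_def by (intro card_le_card_Int_add_card_Int) blast
  moreover have "card (M \<inter> (S1 \<union> S2)) \<le> card (M \<inter> S1) + card (M \<inter> S2)"
    by (simp add: Int_Un_distrib card_Un_le)
  ultimately show ?thesis
    using two_matching_number_two_components[OF G disc] unfolding S1_def S2_def by linarith
qed

lemma acyclic_graph_mono: "acyclic_graph E \<Longrightarrow> F \<subseteq> E \<Longrightarrow> acyclic_graph F"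
  unfolding acyclic_graph_def is_cycle_def by (meson subsetD)

text \<open>The path from w1 to w2 avoiding u closes up with the edges uw1 and uw2 to a cycle.\<close>
lemma acyclic_neighbours_disconnected:
  assumes acyc: "acyclic_graph F" and "{u, w1} \<in> F" "{u, w2} \<in> F" "w1 \<noteq> w2"
  shows "(w1, w2) \<notin> (adj_rel {e \<in> F. u \<notin> e})\<^sup>*"
proof
  define R where "R = (\<lambda>a b. {a, b} \<in> {e \<in> F. u \<notin> e})"
  assume "(w1, w2) \<in> (adj_rel {e \<in> F. u \<notin> e})\<^sup>*"
  then have "R\<^sup>*\<^sup>* w1 w2"
    unfolding R_def adj_rel_def by (simp add: rtranclp_rtrancl_eq)
  then obtain xs where path: "rtrancl_path R w1 xs w2" "distinct (w1 # xs)"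
    by (meson rtranclp_eq_rtrancl_path rtrancl_path_distinct)
  have "xs \<noteq> []"
    using path(1) \<open>w1 \<noteq> w2\<close> by (auto elim: rtrancl_path.cases)
  have "u \<noteq> w1"
    using rtrancl_path_nth[OF path(1), of 0] \<open>xs \<noteq> []\<close> unfolding R_def by simp
  moreover have "u \<notin> set xs"
    using rtrancl_path_Range[OF path(1)] unfolding R_def by blast
  moreover have "{(u # w1 # xs) ! i, (u # w1 # xs) ! Suc i} \<in> F"
    if "Suc i < length (u # w1 # xs)" for i
    using that assms(2) rtrancl_path_nth[OF path(1), of "i - 1"] unfolding R_def
    by (cases i) auto
  moreover have "last (u # w1 # xs) = w2"
    using rtrancl_path_last[OF path(1) \<open>xs \<noteq> []\<close>] \<open>xs \<noteq> []\<close> by simp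
  ultimately have "is_cycle F (u # w1 # xs)"
    using path(2) \<open>xs \<noteq> []\<close> assms(3) unfolding is_cycle_def by (simp add: insert_commute Suc_le_eq)
  then show False
    using acyc unfolding acyclic_graph_def by blast
qed

subsection \<open>Deleting a saturated vertex from a forest\<close>

lemma two_matching_number_delete_saturated_less:
  assumes "finite F" "saturated F u"
  shows "two_matching_number {e \<in> F. u \<notin> e} < two_matching_number F"
proof -
  have "finite {e \<in> F. u \<notin> e}"
    using assms(1) by simp
  then obtain N where N: "two_matching {e \<in> F. u \<notin> e} N" "card N = two_matching_number {e \<in> F. u \<notin> e}"
    by (rule ex_two_matching_card_eq_two_matching_number)
  have "two_matching F N"
    using N(1) by (rule two_matching_mono) blast
  moreover have "{e \<in> N. u \<in> e} = {}"
    using N(1) unfolding two_matching_def by blast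
  then have "deg_in N u = 0"
    unfolding deg_in_def by (simp only: card.empty)
  ultimately have "card N < two_matching_number F"
    by (intro saturated_card_less[OF assms]) simp_all
  then show ?thesis
    using N(2) by simp
qed

text \<open>If deleting u lowers the 2-matching number by only one, a maximum 2-matching of the
  component of a neighbour w with a free slot at w would extend by uw to a maximum 2-matching
  of F with only one edge at u.\<close>
lemma saturated_in_component_of_neighbour:
  assumes F: "simple_graph V F" and sat: "saturated F u" and uw: "{u, w} \<in> F"
    and drop: "two_matching_number F = two_matching_number {e \<in> F. u \<notin> e} + 1"
  shows "saturated (component_edges V {e \<in> F. u \<notin> e} w) w"
proof -
  define G where "G = {e \<in> F. u \<notin> e}"
  have G: "simple_graph V G"
    using F unfolding G_def by (rule simple_graph_mono) blast
  have "finite F"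
    using F by (rule simple_graph_finite_edges)
  have "finite (component_edges V G w)"
    by (rule finite_subset[OF component_edges_subset simple_graph_finite_edges[OF G]])
  have "w \<in> V"
    using F uw by (rule simple_graph_edge_vertices)
  have "deg_in N w = 2"
    if N: "two_matching (component_edges V G w) N" "card N = two_matching_number (component_edges V G w)"
    for N
  proof (rule ccontr)
    assume "deg_in N w \<noteq> 2"
    then have "deg_in N w < 2"
      using N(1) unfolding two_matching_def by (simp add: le_neq_implies_less)
    obtain M where M: "two_matching G M" "card M = two_matching_number G" "deg_in M w = deg_in N w"
      using ex_max_two_matching_extending_component[OF G \<open>w \<in> V\<close> N] .
    have "finite M"
      using simple_graph_finite_edges[OF G] M(1) by (rule two_matching_finite)
    have "{e \<in> M. u \<in> e} = {}"
      using M(1) unfolding two_matching_def G_def by blast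
    then have "deg_in M u = 0"
      unfolding deg_in_def by (simp only: card.empty)
    then have "\<forall>x\<in>{u, w}. deg_in M x \<le> 1"
      using \<open>deg_in N w < 2\<close> M(3) by auto
    then have M': "two_matching F (insert {u, w} M)"
      using two_matching_mono[OF M(1)] uw unfolding G_def by (intro two_matching_insert) auto
    have "{u, w} \<notin> M"
      using M(1) unfolding two_matching_def G_def by blast
    then have "card (insert {u, w} M) = two_matching_number F"
      using \<open>finite M\<close> M(2) drop unfolding G_def by simp
    moreover have "{e \<in> insert {u, w} M. u \<in> e} = insert {u, w} {e \<in> M. u \<in> e}"
      by auto
    then have "deg_in (insert {u, w} M) u < 2"
      unfolding deg_in_def by (simp only: \<open>{e \<in> M. u \<in> e} = {}\<close>, simp)
    then have "card (insert {u, w} M) < two_matching_number F"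
      by (rule saturated_card_less[OF \<open>finite F\<close> sat M'])
    ultimately show False
      by simp
  qed
  then show ?thesis
    using max_two_matching_iff[OF \<open>finite (component_edges V G w)\<close>]
    unfolding saturated_def G_def by blast
qed

lemma card_two_matching_avoiding_saturated:
  assumes F: "simple_graph V F" and acyc: "acyclic_graph F" and sat: "saturated F u"
    and L: "two_matching F L" and avoid: "\<forall>e\<in>L. u \<notin> e"
  shows "card L + 2 \<le> two_matching_number F"
proof (rule ccontr)
  assume contra: "\<not> ?thesis"
  define G where "G = {e \<in> F. u \<notin> e}"
  have G: "simple_graph V G"
    using F unfolding G_def by (rule simple_graph_mono) blast
  have "finite F"
    using F by (rule simple_graph_finite_edges)
  have "finite G"
    using G by (rule simple_graph_finite_edges)
  have "two_matching G L"
    using L avoid unfolding two_matching_def G_def by blast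
  then have "card L \<le> two_matching_number G"
    using \<open>finite G\<close> by (rule card_le_two_matching_number[rotated])
  then have drop: "two_matching_number F = two_matching_number G + 1"
    using contra two_matching_number_delete_saturated_less[OF \<open>finite F\<close> sat] unfolding G_def
    by linarith
  obtain K where K: "two_matching F K" "card K = two_matching_number F"
    using \<open>finite F\<close> by (rule ex_two_matching_card_eq_two_matching_number)
  have "finite K"
    using \<open>finite F\<close> K(1) by (rule two_matching_finite)
  have "deg_in K u = 2"
    using sat K max_two_matching_iff[OF \<open>finite F\<close>] unfolding saturated_def by blast
  obtain w1 w2 where w12: "{e \<in> K. u \<in> e} = {{u, w1}, {u, w2}}" "w1 \<noteq> w2"
    using F K(1) \<open>deg_in K u = 2\<close> by (rule deg_in_2_neighbours)
  have "K - G = {e \<in> K. u \<in> e}"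
    using K(1) unfolding two_matching_def G_def by blast
  then have K_G: "K - G = {{u, w1}, {u, w2}}"
    using w12(1) by simp
  then have "{u, w1} \<in> F" "{u, w2} \<in> F"
    using K(1) unfolding two_matching_def by blast+
  have "card (K \<inter> G) + 2 \<le> two_matching_number G"
  proof (rule card_two_matching_deficient_in_two_components[OF G])
    show "(w1, w2) \<notin> (adj_rel G)\<^sup>*"
      unfolding G_def by (rule acyclic_neighbours_disconnected) fact+
    show "saturated (component_edges V G w1) w1" "saturated (component_edges V G w2) w2"
      unfolding G_def by (rule saturated_in_component_of_neighbour[OF F sat _ drop[unfolded G_def]], fact)+
    show "two_matching G (K \<inter> G)"
      using \<open>finite K\<close> K(1) by (rule two_matching_Int)
    show "deg_in (K \<inter> G) w1 < 2" "deg_in (K \<inter> G) w2 < 2"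
      using deg_in_Int_less_2[OF K(1) \<open>finite K\<close>] K_G by blast+
  qed
  moreover have "card K = card (K \<inter> G) + 2"
    using card_Int_Diff[OF \<open>finite K\<close>, of G] K_G w12(2) by (simp add: doubleton_eq_iff)
  ultimately show False
    using K(2) drop by linarith
qed

lemma saturated_if_saturated_in_component:
  assumes E: "simple_graph V E"
    and acyc: "acyclic_graph (component_edges V (E - {{u, v}}) u)"
    and sat: "saturated (component_edges V (E - {{u, v}}) u) u"
  shows "saturated E u"
  unfolding saturated_def
proof (intro allI impI)
  define Eu where "Eu = component_edges V (E - {{u, v}}) u"
  define Ev where "Ev = E - {{u, v}} - Eu"
  have finE: "finite E" and E': "simple_graph V (E - {{u, v}})"
    using E by (rule simple_graph_finite_edges, rule simple_graph_mono) blast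
  have Eu: "simple_graph V Eu" "finite Eu" "finite Ev"
    using E' finE component_edges_subset[of V "E - {{u, v}}" u] unfolding Eu_def Ev_def
    by (auto intro: simple_graph_mono finite_subset)
  have split: "E \<subseteq> insert {u, v} (Eu \<union> Ev)" "{u, v} \<notin> Eu"
    using component_edges_subset[of V "E - {{u, v}}" u] unfolding Eu_def Ev_def by blast+
  have nu: "two_matching_number Eu + two_matching_number Ev \<le> two_matching_number E"
    using two_matching_number_component_split[OF E', of u] two_matching_number_mono[OF finE, of "E - {{u, v}}"]
    unfolding Eu_def Ev_def by simp
  fix M assume "max_two_matching E M"
  then have M: "two_matching E M" "card M = two_matching_number E" "finite M"
    using max_two_matching_iff[OF finE] finE two_matching_finite by blast+
  have MEv: "card (M \<inter> Ev) \<le> two_matching_number Ev"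
    using M(3) Eu(3) M(1) by (rule card_Int_le_two_matching_number)
  show "deg_in M u = 2"
  proof (rule ccontr)
    assume "deg_in M u \<noteq> 2"
    then have deg: "deg_in M u < 2"
      using M(1) unfolding two_matching_def by (simp add: le_neq_implies_less)
    show False
    proof (cases "{u, v} \<in> M")
      case False
      have "card (M \<inter> Eu) < two_matching_number Eu"
        using saturated_card_less[OF Eu(2) sat[folded Eu_def] two_matching_Int[OF M(3,1)]]
          deg_in_mono[OF M(3), of "M \<inter> Eu" u] deg by simp
      moreover have "card M \<le> card (M \<inter> Eu) + card (M \<inter> Ev)"
        using split(1) False M(1) unfolding two_matching_def by (intro card_le_card_Int_add_card_Int) blast
      ultimately show False
        using MEv M(2) nu by linarith
    next
      case True
      have "\<forall>e\<in>M \<inter> Eu. u \<notin> e"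
        using deg_in_less_2_only_edge[OF M(3) True _ deg] split(2) by blast
      then have "card (M \<inter> Eu) + 2 \<le> two_matching_number Eu"
        using card_two_matching_avoiding_saturated[OF Eu(1) acyc[folded Eu_def] sat[folded Eu_def]
            two_matching_Int[OF M(3,1)]] by blast
      moreover have "card M \<le> card (M \<inter> Eu) + card (M \<inter> Ev) + 1"
        using split(1) M(1) unfolding two_matching_def
        by (intro card_le_card_Int_add_card_Int_insert[OF M(3)]) blast
      ultimately show False
        using MEv M(2) nu by linarith
    qed
  qed
qed

theorem proposition2p6:
  fixes V :: "'a set" and E :: "'a set set" and u v :: 'a
  assumes "is_tree V E"
    and "{u, v} \<in> E"
    and "saturated (component_edges V (E - {{u, v}}) u) u"
  shows "saturated E u"
proof -
  \<comment> \<open>The edge uv need not lie in E: only the split of E - {uv} is used.\<close>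
  have "simple_graph V E" "acyclic_graph E"
    using assms(1) unfolding is_tree_def by blast+
  moreover have "component_edges V (E - {{u, v}}) u \<subseteq> E"
    using component_edges_subset[of V "E - {{u, v}}" u] by blast
  ultimately show ?thesis
    using assms(3) by (rule saturated_if_saturated_in_component[OF _ acyclic_graph_mono])
qed

end
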